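(* Let $\Delta\vdash s$ and $\Delta\vdash t$ be closed nominal terms-in-context such that $\Delta\vdash s\approx_\alpha t$. Then $\mathcal{T}(\Delta,s)=\mathcal{T}(\Delta,t)$ (as CRS meta-terms modulo renaming of bound variables).
   Context: Nominal terms over signature $\Sigma$, atoms $\mathcal{A}$, variables $\mathcal{X}$: $s,t ::= a \mid \pi\cdot X \mid [a]s \mid f\,s \mid (s_1,\ldots,s_n)$, with $\pi$ finite-support permutations of atoms (lists of swappings) acting on terms by swapping atom names everywhere (including abstracted ones) and composing with suspended permutations. A freshness context $\Delta$ is a set of constraints $a\#X$. Freshness: $a\#b$; $a\#\pi\cdot X$ if $\pi^{-1}(a)\#X\in\Delta$; $a\#[a]s$; $a\#[b]s$ if $a\#s$; componentwise for function applications and tuples. $\alpha$-equivalence: $a\approx_\alpha a$; $\pi\cdot X\approx_\alpha\pi'\cdot X$ if $a\#X\in\Delta$ for all $a$ with $\pi(a)\neq\pi'(a)$; $[a]s\approx_\alpha[a]t$ if $s\approx_\alpha t$; $[a]s\approx_\alpha[b]t$ if $(b\ a)\cdot s\approx_\alpha t$ and $b\#s$; congruence for function application and tuples. A term-in-context $\Delta\vdash t$ is closed if: (1) every atom occurrence $a$ in $t$ is under an abstraction $[a]$; (2) if $\pi\cdot X$ is in the scope of an abstraction of $\pi(a)$ then every occurrence $\pi'\cdot X$ is in the scope of an abstraction of $\pi'(a)$, or $a\#X\in\Delta$; (3) for two occurrences $\pi_1\cdot X,\pi_2\cdot X$ and $a$ with $\pi_1(a)\neq\pi_2(a)$, if $a$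 is not abstracted in one of the occurrences then $a\#X\in\Delta$. CRS meta-terms: $a\mid Z(t_1,\dots,t_n)\mid[a]t\mid f\,t\mid(t_1,\dots,t_n)$ with meta-variables $Z$, modulo renaming of bound variables. Translation: $\Lambda_t(X)$ is the set of atoms $a$ such that some occurrence of $X$ in $t$ is in the scope of $[a]$. With a fixed total order on atoms, $\mathcal{T}(\Delta,t)$ is obtained from $t$ by replacing each occurrence $\pi\cdot X$ by the meta-application $X(\pi\cdot xs)$, where $xs$ is the ascending list of $\{\pi^{-1}(a)\mid a\in\Lambda_t(X)\}\setminus\{a\mid a\#X\in\Delta\}$ and $\pi\cdot xs$ applies $\pi$ elementwise (no arguments if empty), leaving atoms, abstractions, function applications and tuples unchanged. *)

theory Defs
  imports Main
begin

type_synonym 'a perm = "('a \<times> 'a) list"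

datatype ('a, 'v, 'f) nterm =
    Atom 'a
  | Susp "'a perm" 'v
  | Abs 'a "('a, 'v, 'f) nterm"
  | App 'f "('a, 'v, 'f) nterm"
  | Tup "('a, 'v, 'f) nterm list"

definition swap :: "'a \<Rightarrow> 'a \<Rightarrow> 'a \<Rightarrow> 'a" where
  "swap a b c = (if c = a then b else if c = b then a else c)"

text \<open>The list [(a1,b1),...,(an,bn)] denotes (a1 b1) o ... o (an bn).\<close>
fun perm_apply :: "'a perm \<Rightarrow> 'a \<Rightarrow> 'a" where
  "perm_apply [] c = c"
| "perm_apply ((a, b) # \<pi>) c = swap a b (perm_apply \<pi> c)"

definition perm_inv :: "'a perm \<Rightarrow> 'a perm" where
  "perm_inv \<pi> = rev \<pi>"

fun perm_term :: "'a perm \<Rightarrow> ('a, 'v, 'f) nterm \<Rightarrow> ('a, 'v, 'f) nterm" where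
  "perm_term \<pi> (Atom a) = Atom (perm_apply \<pi> a)"
| "perm_term \<pi> (Susp \<pi>' X) = Susp (\<pi> @ \<pi>') X"
| "perm_term \<pi> (Abs a s) = Abs (perm_apply \<pi> a) (perm_term \<pi> s)"
| "perm_term \<pi> (App f s) = App f (perm_term \<pi> s)"
| "perm_term \<pi> (Tup ts) = Tup (map (perm_term \<pi>) ts)"

text \<open>Freshness contexts: sets of constraints a#X, represented as pairs (a, X).\<close>
type_synonym ('a, 'v) fctx = "('a \<times> 'v) set"

inductive fresh :: "('a, 'v) fctx \<Rightarrow> 'a \<Rightarrow> ('a, 'v, 'f) nterm \<Rightarrow> bool" for \<Delta> where
  fresh_atom: "a \<noteq> b \<Longrightarrow> fresh \<Delta> a (Atom b)"
| fresh_susp: "(perm_apply (perm_inv \<pi>) a, X) \<in> \<Delta> \<Longrightarrow> fresh \<Delta> a (Susp \<pi> X)"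
| fresh_abs_same: "fresh \<Delta> a (Abs a s)"
| fresh_abs: "fresh \<Delta> a s \<Longrightarrow> fresh \<Delta> a (Abs b s)"
| fresh_app: "fresh \<Delta> a s \<Longrightarrow> fresh \<Delta> a (App f s)"
| fresh_tup: "(\<forall>t \<in> set ts. fresh \<Delta> a t) \<Longrightarrow> fresh \<Delta> a (Tup ts)"

inductive alpha :: "('a, 'v) fctx \<Rightarrow> ('a, 'v, 'f) nterm \<Rightarrow> ('a, 'v, 'f) nterm \<Rightarrow> bool"
  for \<Delta> where
  alpha_atom: "alpha \<Delta> (Atom a) (Atom a)"
| alpha_susp: "(\<forall>a. perm_apply \<pi> a \<noteq> perm_apply \<pi>' a \<longrightarrow> (a, X) \<in> \<Delta>)
     \<Longrightarrow> alpha \<Delta> (Susp \<pi> X) (Susp \<pi>' X)"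
| alpha_abs_same: "alpha \<Delta> s t \<Longrightarrow> alpha \<Delta> (Abs a s) (Abs a t)"
| alpha_abs: "alpha \<Delta> (perm_term [(b, a)] s) t \<Longrightarrow> fresh \<Delta> b s
     \<Longrightarrow> alpha \<Delta> (Abs a s) (Abs b t)"
| alpha_app: "alpha \<Delta> s t \<Longrightarrow> alpha \<Delta> (App f s) (App f t)"
| alpha_tup: "list_all2 (alpha \<Delta>) ss ts \<Longrightarrow> alpha \<Delta> (Tup ss) (Tup ts)"

fun atom_occs :: "'a set \<Rightarrow> ('a, 'v, 'f) nterm \<Rightarrow> ('a set \<times> 'a) set" where
  "atom_occs B (Atom a) = {(B, a)}"
| "atom_occs B (Susp \<pi> X) = {}"
| "atom_occs B (Abs a s) = atom_occs (insert a B) s"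
| "atom_occs B (App f s) = atom_occs B s"
| "atom_occs B (Tup ts) = (\<Union>t \<in> set ts. atom_occs B t)"

fun var_occs :: "'a set \<Rightarrow> ('a, 'v, 'f) nterm \<Rightarrow> ('a set \<times> 'a perm \<times> 'v) set" where
  "var_occs B (Atom a) = {}"
| "var_occs B (Susp \<pi> X) = {(B, \<pi>, X)}"
| "var_occs B (Abs a s) = var_occs (insert a B) s"
| "var_occs B (App f s) = var_occs B s"
| "var_occs B (Tup ts) = (\<Union>t \<in> set ts. var_occs B t)"

definition closed :: "('a, 'v) fctx \<Rightarrow> ('a, 'v, 'f) nterm \<Rightarrow> bool" where
  "closed \<Delta> t \<longleftrightarrow>
     (\<forall>(B, a) \<in> atom_occs {} t. a \<in> B) \<and>
     (\<forall>(B, \<pi>, X) \<in> var_occs {} t. \<forall>a. perm_apply \<pi> a \<in> B \<longrightarrow>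
        (\<forall>(B', \<pi>', X') \<in> var_occs {} t. X' = X \<longrightarrow> perm_apply \<pi>' a \<in> B') \<or> (a, X) \<in> \<Delta>) \<and>
     (\<forall>(B1, \<pi>1, X1) \<in> var_occs {} t. \<forall>(B2, \<pi>2, X2) \<in> var_occs {} t. \<forall>a.
        X1 = X2 \<longrightarrow> perm_apply \<pi>1 a \<noteq> perm_apply \<pi>2 a \<longrightarrow>
        (perm_apply \<pi>1 a \<notin> B1 \<or> perm_apply \<pi>2 a \<notin> B2) \<longrightarrow> (a, X1) \<in> \<Delta>)"

datatype ('a, 'v, 'f) mterm =
    MAtom 'a
  | MVar 'v "('a, 'v, 'f) mterm list"
  | MAbs 'a "('a, 'v, 'f) mterm"
  | MApp 'f "('a, 'v, 'f) mterm"
  | MTup "('a, 'v, 'f) mterm list"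

fun mswap :: "'a \<Rightarrow> 'a \<Rightarrow> ('a, 'v, 'f) mterm \<Rightarrow> ('a, 'v, 'f) mterm" where
  "mswap a b (MAtom c) = MAtom (swap a b c)"
| "mswap a b (MVar Z ts) = MVar Z (map (mswap a b) ts)"
| "mswap a b (MAbs c s) = MAbs (swap a b c) (mswap a b s)"
| "mswap a b (MApp f s) = MApp f (mswap a b s)"
| "mswap a b (MTup ts) = MTup (map (mswap a b) ts)"

fun mfv :: "('a, 'v, 'f) mterm \<Rightarrow> 'a set" where
  "mfv (MAtom c) = {c}"
| "mfv (MVar Z ts) = (\<Union>t \<in> set ts. mfv t)"
| "mfv (MAbs c s) = mfv s - {c}"
| "mfv (MApp f s) = mfv s"
| "mfv (MTup ts) = (\<Union>t \<in> set ts. mfv t)"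

inductive malpha :: "('a, 'v, 'f) mterm \<Rightarrow> ('a, 'v, 'f) mterm \<Rightarrow> bool" where
  malpha_atom: "malpha (MAtom a) (MAtom a)"
| malpha_var: "list_all2 malpha ss ts \<Longrightarrow> malpha (MVar Z ss) (MVar Z ts)"
| malpha_abs_same: "malpha s t \<Longrightarrow> malpha (MAbs a s) (MAbs a t)"
| malpha_abs: "malpha (mswap b a s) t \<Longrightarrow> b \<notin> mfv s \<Longrightarrow> malpha (MAbs a s) (MAbs b t)"
| malpha_app: "malpha s t \<Longrightarrow> malpha (MApp f s) (MApp f t)"
| malpha_tup: "list_all2 malpha ss ts \<Longrightarrow> malpha (MTup ss) (MTup ts)"

text \<open>Lambda_t(X): atoms a such that some occurrence of X in t is in the scope of [a].\<close>
definition Lam :: "('a, 'v, 'f) nterm \<Rightarrow> 'v \<Rightarrow> 'a set" where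
  "Lam t X = \<Union>{B. \<exists>\<pi>. (B, \<pi>, X) \<in> var_occs {} t}"

fun tr :: "('a::linorder, 'v) fctx \<Rightarrow> ('v \<Rightarrow> 'a set) \<Rightarrow> ('a, 'v, 'f) nterm \<Rightarrow> ('a, 'v, 'f) mterm" where
  "tr \<Delta> L (Atom a) = MAtom a"
| "tr \<Delta> L (Susp \<pi> X) = MVar X (map (\<lambda>b. MAtom (perm_apply \<pi> b))
      (sorted_list_of_set ((\<lambda>a. perm_apply (perm_inv \<pi>) a) ` L X - {a. (a, X) \<in> \<Delta>})))"
| "tr \<Delta> L (Abs a s) = MAbs a (tr \<Delta> L s)"
| "tr \<Delta> L (App f s) = MApp f (tr \<Delta> L s)"
| "tr \<Delta> L (Tup ts) = MTup (map (tr \<Delta> L) ts)"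

definition translate :: "('a::linorder, 'v) fctx \<Rightarrow> ('a, 'v, 'f) nterm \<Rightarrow> ('a, 'v, 'f) mterm" where
  "translate \<Delta> t = tr \<Delta> (Lam t) t"

end

theory Submission
  imports Defs
begin

text \<open>
  On a closed term every occurrence of a suspension \<open>\<pi>\<cdot>X\<close> sees, up to atoms fresh for \<open>X\<close>,
  exactly the atoms of \<open>\<Lambda>\<^sub>t(X)\<close> among the abstractions above it. So the translation can be
  computed locally, each suspension taking its arguments from its own binders. This local
  translation respects \<open>\<alpha>\<close>-equivalence for arbitrary terms, provided the binder sets on the two
  sides agree on the atoms that are not fresh for the term: an abstraction \<open>[a]s \<approx> [b]t\<close> is
  matched by swapping \<open>a\<close> and \<open>b\<close>, the translation commutes with swapping, and \<open>b # s\<close> becomes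
  \<open>b \<notin> fv\<close>; for suspensions the arguments that survive are exactly the non-fresh ones, on which
  the two permutations agree.
\<close>

definition susp_args :: "('a, 'v) fctx \<Rightarrow> 'a perm \<Rightarrow> 'v \<Rightarrow> 'a set \<Rightarrow> 'a set" where
  "susp_args \<Delta> \<pi> X B = perm_apply (perm_inv \<pi>) ` B - {a. (a, X) \<in> \<Delta>}"

fun tr_scoped :: "('a::linorder, 'v) fctx \<Rightarrow> 'a set \<Rightarrow> ('a, 'v, 'f) nterm \<Rightarrow> ('a, 'v, 'f) mterm"
where
  "tr_scoped \<Delta> B (Atom a) = MAtom a"
| "tr_scoped \<Delta> B (Susp \<pi> X) =
     MVar X (map (\<lambda>b. MAtom (perm_apply \<pi> b)) (sorted_list_of_set (susp_args \<Delta> \<pi> X B)))"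
| "tr_scoped \<Delta> B (Abs a s) = MAbs a (tr_scoped \<Delta> (insert a B) s)"
| "tr_scoped \<Delta> B (App f s) = MApp f (tr_scoped \<Delta> B s)"
| "tr_scoped \<Delta> B (Tup ts) = MTup (map (tr_scoped \<Delta> B) ts)"

lemma swap_apply [simp]: "swap a b a = b" "swap a b b = a"
  by (simp_all add: swap_def)

lemma swap_swap [simp]: "swap a b (swap a b c) = c"
  by (simp add: swap_def)

lemma perm_apply_append [simp]: "perm_apply (xs @ ys) c = perm_apply xs (perm_apply ys c)"
  by (induction xs arbitrary: c) auto

lemma perm_apply_inv_left [simp]: "perm_apply (perm_inv \<pi>) (perm_apply \<pi> c) = c"
  unfolding perm_inv_def by (induction \<pi> arbitrary: c) auto

lemma perm_apply_inv_right [simp]: "perm_apply \<pi> (perm_apply (perm_inv \<pi>) c) = c"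
  using perm_apply_inv_left [of "rev \<pi>" c] by (simp add: perm_inv_def)

lemma perm_inv_append [simp]: "perm_inv (xs @ ys) = perm_inv ys @ perm_inv xs"
  by (simp add: perm_inv_def)

lemma perm_inv_Cons: "perm_apply (perm_inv ((a, b) # \<pi>)) c = perm_apply (perm_inv \<pi>) (swap a b c)"
  by (simp add: perm_inv_def)

lemma swap_image_iff: "c \<in> swap a b ` B \<longleftrightarrow> swap a b c \<in> B"
  by (metis image_iff swap_swap)

inductive_cases fresh_SuspE: "fresh \<Delta> c (Susp \<pi> X)"
inductive_cases fresh_AbsE: "fresh \<Delta> c (Abs a s)"
inductive_cases fresh_AppE: "fresh \<Delta> c (App f s)"
inductive_cases fresh_TupE: "fresh \<Delta> c (Tup ts)"

lemma fresh_Susp_iff: "fresh \<Delta> c (Susp \<pi> X) \<longleftrightarrow> (perm_apply (perm_inv \<pi>) c, X) \<in> \<Delta>"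
  by (blast elim: fresh_SuspE intro: fresh_susp)

lemma fresh_perm_term: "fresh \<Delta> c s \<Longrightarrow> fresh \<Delta> (perm_apply \<pi> c) (perm_term \<pi> s)"
proof (induction rule: fresh.induct)
  case (fresh_atom a b)
  then show ?case
    by (metis fresh.fresh_atom perm_apply_inv_left perm_term.simps(1))
next
  case (fresh_susp \<pi>' a X)
  then show ?case by (simp add: fresh_Susp_iff)
next
  case (fresh_tup ts a)
  then show ?case by (auto intro!: fresh.fresh_tup)
qed (auto intro: fresh.intros)

lemma not_fresh_Abs: "\<not> fresh \<Delta> c s \<Longrightarrow> c \<noteq> a \<Longrightarrow> \<not> fresh \<Delta> c (Abs a s)"
  by (auto elim: fresh_AbsE)

lemma not_fresh_App: "\<not> fresh \<Delta> c s \<Longrightarrow> \<not> fresh \<Delta> c (App f s)"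
  by (auto elim: fresh_AppE)

lemma not_fresh_Tup: "\<not> fresh \<Delta> c t \<Longrightarrow> t \<in> set ts \<Longrightarrow> \<not> fresh \<Delta> c (Tup ts)"
  by (auto elim: fresh_TupE)

lemma mem_susp_args: "x \<in> susp_args \<Delta> \<pi> X B \<longleftrightarrow> (x, X) \<notin> \<Delta> \<and> perm_apply \<pi> x \<in> B"
  by (auto simp: susp_args_def intro: image_eqI [where x = "perm_apply \<pi> x"])

lemma set_sorted_list_of_set_subset: "set (sorted_list_of_set A) \<subseteq> A"
  by (cases "finite A") auto

lemma mswap_tr_scoped:
  "mswap b a (tr_scoped \<Delta> B s) = tr_scoped \<Delta> (swap b a ` B) (perm_term [(b, a)] s)"
proof (induction s arbitrary: B)
  case (Susp \<pi> X)
  have "susp_args \<Delta> ((b, a) # \<pi>) X (swap b a ` B) = susp_args \<Delta> \<pi> X B"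
    by (simp add: susp_args_def perm_inv_Cons image_image)
  then show ?case by (simp add: comp_def)
qed (auto simp: image_insert)

lemma fresh_not_in_mfv: "fresh \<Delta> c s \<Longrightarrow> c \<notin> mfv (tr_scoped \<Delta> B s)"
proof (induction arbitrary: B rule: fresh.induct)
  case (fresh_susp \<pi> a X)
  have "(perm_apply (perm_inv \<pi>) (perm_apply \<pi> x), X) \<notin> \<Delta>"
    if "x \<in> set (sorted_list_of_set (susp_args \<Delta> \<pi> X B))" for x
    using that set_sorted_list_of_set_subset by (fastforce simp: mem_susp_args)
  with fresh_susp show ?case by auto
qed auto

lemma malpha_refl: "malpha m m"
  by (induction m) (auto intro: malpha.intros list.rel_refl_strong)

lemma tr_scoped_Susp_alpha:
  assumes perms_agree: "\<forall>a. perm_apply \<pi> a \<noteq> perm_apply \<pi>' a \<longrightarrow> (a, X) \<in> \<Delta>"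
    and scopes_agree: "\<forall>c. \<not> fresh \<Delta> c (Susp \<pi> X) \<longrightarrow> (c \<in> B \<longleftrightarrow> c \<in> B')"
  shows "tr_scoped \<Delta> B (Susp \<pi> X) = tr_scoped \<Delta> B' (Susp \<pi>' X)"
proof -
  have agree: "perm_apply \<pi> x = perm_apply \<pi>' x" if "(x, X) \<notin> \<Delta>" for x
    using perms_agree that by blast
  have in_scope: "perm_apply \<pi> x \<in> B \<longleftrightarrow> perm_apply \<pi> x \<in> B'" if "(x, X) \<notin> \<Delta>" for x
    using scopes_agree that by (simp add: fresh_Susp_iff)
  have args: "susp_args \<Delta> \<pi> X B = susp_args \<Delta> \<pi>' X B'"
    using agree in_scope by (auto simp: mem_susp_args)
  have "map (\<lambda>b. MAtom (perm_apply \<pi> b)) (sorted_list_of_set (susp_args \<Delta> \<pi> X B))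
      = map (\<lambda>b. MAtom (perm_apply \<pi>' b)) (sorted_list_of_set (susp_args \<Delta> \<pi> X B))"
    using agree set_sorted_list_of_set_subset by (fastforce simp: mem_susp_args intro: map_cong)
  with args show ?thesis
    by simp
qed

lemma alpha_tr_scoped:
  "alpha \<Delta> s t \<Longrightarrow> \<forall>c. \<not> fresh \<Delta> c s \<longrightarrow> (c \<in> B \<longleftrightarrow> c \<in> B')
   \<Longrightarrow> malpha (tr_scoped \<Delta> B s) (tr_scoped \<Delta> B' t)"
proof (induction arbitrary: B B' rule: alpha.induct)
  case (alpha_atom a)
  then show ?case by (simp add: malpha_atom)
next
  case (alpha_susp \<pi> \<pi>' X)
  then show ?case by (simp only: tr_scoped_Susp_alpha malpha_refl)
next
  case (alpha_abs_same s t a)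
  then have "malpha (tr_scoped \<Delta> (insert a B) s) (tr_scoped \<Delta> (insert a B') t)"
    by (metis insert_iff not_fresh_Abs)
  then show ?case by (simp add: malpha_abs_same)
next
  case (alpha_abs b a s t)
  have "c \<in> swap b a ` insert a B \<longleftrightarrow> c \<in> insert b B'"
    if nf: "\<not> fresh \<Delta> c (perm_term [(b, a)] s)" for c
  proof (cases "c = b")
    case True
    then show ?thesis
      by (simp add: image_insert)
  next
    case False
    have "\<not> fresh \<Delta> (swap b a c) s"
      using nf fresh_perm_term [of \<Delta> "swap b a c" s "[(b, a)]"] by auto
    with \<open>fresh \<Delta> b s\<close> False have "c \<noteq> a"
      by (auto simp: swap_def)
    with False have "swap b a c = c"
      by (simp add: swap_def)
    with \<open>\<not> fresh \<Delta> (swap b a c) s\<close> have "\<not> fresh \<Delta> c (Abs a s)"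
      using \<open>c \<noteq> a\<close> by (simp add: not_fresh_Abs)
    then have "c \<in> B \<longleftrightarrow> c \<in> B'"
      using alpha_abs.prems by blast
    with False \<open>c \<noteq> a\<close> \<open>swap b a c = c\<close> show ?thesis
      by (simp add: swap_image_iff)
  qed
  then have "malpha (tr_scoped \<Delta> (swap b a ` insert a B) (perm_term [(b, a)] s))
      (tr_scoped \<Delta> (insert b B') t)"
    using alpha_abs.IH by blast
  then have "malpha (mswap b a (tr_scoped \<Delta> (insert a B) s)) (tr_scoped \<Delta> (insert b B') t)"
    by (simp only: mswap_tr_scoped)
  moreover have "b \<notin> mfv (tr_scoped \<Delta> (insert a B) s)"
    using fresh_not_in_mfv alpha_abs.hyps(2) by blast
  ultimately show ?case
    unfolding tr_scoped.simps by (rule malpha_abs)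
next
  case (alpha_app s t f)
  have "c \<in> B \<longleftrightarrow> c \<in> B'" if "\<not> fresh \<Delta> c s" for c
    using alpha_app.prems not_fresh_App [OF that] by blast
  then have "malpha (tr_scoped \<Delta> B s) (tr_scoped \<Delta> B' t)"
    by (intro alpha_app.IH allI impI)
  then show ?case
    unfolding tr_scoped.simps by (rule malpha_app)
next
  case (alpha_tup ss ts)
  have "list_all2 malpha (map (tr_scoped \<Delta> B) ss) (map (tr_scoped \<Delta> B') ts)"
    unfolding list.rel_map
  proof (rule list.rel_mono_strong [OF alpha_tup.IH])
    fix x y
    assume "x \<in> set ss" and IH: "alpha \<Delta> x y \<and> (\<forall>B B'.
      (\<forall>c. \<not> fresh \<Delta> c x \<longrightarrow> (c \<in> B \<longleftrightarrow> c \<in> B')) \<longrightarrow>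
        malpha (tr_scoped \<Delta> B x) (tr_scoped \<Delta> B' y))"
    have "c \<in> B \<longleftrightarrow> c \<in> B'" if "\<not> fresh \<Delta> c x" for c
      using alpha_tup.prems not_fresh_Tup [OF that \<open>x \<in> set ss\<close>] by blast
    with IH show "malpha (tr_scoped \<Delta> B x) (tr_scoped \<Delta> B' y)"
      by blast
  qed
  then show ?case
    unfolding tr_scoped.simps by (rule malpha_tup)
qed

lemma tr_eq_tr_scoped:
  assumes "\<forall>(Bo, \<pi>, X) \<in> var_occs B s. susp_args \<Delta> \<pi> X (L X) = susp_args \<Delta> \<pi> X Bo"
  shows "tr \<Delta> L s = tr_scoped \<Delta> B s"
  using assms
proof (induction s arbitrary: B)
  case (Susp \<pi> X)
  then show ?case by (simp add: susp_args_def)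
next
  case (Tup ts)
  then show ?case by (fastforce intro!: map_cong)
qed auto

lemma closed_scope_transfer:
  assumes "closed \<Delta> s" "(B, \<pi>, X) \<in> var_occs {} s" "(B', \<pi>', X) \<in> var_occs {} s"
    "perm_apply \<pi> a \<in> B" "(a, X) \<notin> \<Delta>"
  shows "perm_apply \<pi>' a \<in> B'"
  using bspec [OF conjunct1 [OF conjunct2 [OF assms(1) [unfolded closed_def]]] assms(2)] assms(3-5)
  by auto

lemma closed_scope_disagree:
  assumes "closed \<Delta> s" "(B1, \<pi>1, X) \<in> var_occs {} s" "(B2, \<pi>2, X) \<in> var_occs {} s"
    "perm_apply \<pi>1 a \<noteq> perm_apply \<pi>2 a" "perm_apply \<pi>1 a \<notin> B1"
  shows "(a, X) \<in> \<Delta>"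
  using bspec [OF conjunct2 [OF conjunct2 [OF assms(1) [unfolded closed_def]]] assms(2)] assms(3-5)
  by auto

lemma closed_susp_args_Lam:
  assumes "closed \<Delta> s" and occ: "(Bo, \<pi>, X) \<in> var_occs {} s"
  shows "susp_args \<Delta> \<pi> X (Lam s X) = susp_args \<Delta> \<pi> X Bo"
proof (intro equalityI subsetI)
  fix x
  assume "x \<in> susp_args \<Delta> \<pi> X (Lam s X)"
  then have fresh_x: "(x, X) \<notin> \<Delta>" and "perm_apply \<pi> x \<in> Lam s X"
    by (simp_all add: mem_susp_args)
  then obtain B' \<pi>' where occ': "(B', \<pi>', X) \<in> var_occs {} s" and "perm_apply \<pi> x \<in> B'"
    unfolding Lam_def by blast
  have "perm_apply \<pi> x \<in> Bo"
  proof (cases "perm_apply \<pi>' x = perm_apply \<pi> x")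
    case True
    with \<open>perm_apply \<pi> x \<in> B'\<close> show ?thesis
      using closed_scope_transfer [OF assms(1) occ' occ _ fresh_x] by simp
  next
    case False
    with fresh_x show ?thesis
      using closed_scope_disagree [OF assms(1) occ occ', of x] by auto
  qed
  with fresh_x show "x \<in> susp_args \<Delta> \<pi> X Bo"
    by (simp add: mem_susp_args)
next
  fix x
  assume "x \<in> susp_args \<Delta> \<pi> X Bo"
  moreover have "Bo \<subseteq> Lam s X"
    using occ unfolding Lam_def by blast
  ultimately show "x \<in> susp_args \<Delta> \<pi> X (Lam s X)"
    by (auto simp: mem_susp_args)
qed

lemma closed_translate_eq_tr_scoped:
  assumes "closed \<Delta> s"
  shows "translate \<Delta> s = tr_scoped \<Delta> {} s"
  unfolding translate_def
proof (rule tr_eq_tr_scoped, intro ballI, clarify)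
  fix Bo \<pi> X
  assume "(Bo, \<pi>, X) \<in> var_occs {} s"
  with assms show "susp_args \<Delta> \<pi> X (Lam s X) = susp_args \<Delta> \<pi> X Bo"
    by (rule closed_susp_args_Lam)
qed

theorem mainTheorem4:
  fixes \<Delta> :: "('a::linorder, 'v) fctx" and s t :: "('a, 'v, 'f) nterm"
  assumes "infinite (UNIV :: 'a set)"
    and "closed \<Delta> s" and "closed \<Delta> t"
    and "alpha \<Delta> s t"
  shows "malpha (translate \<Delta> s) (translate \<Delta> t)"
  \<comment> \<open>No fresh names are ever needed.\<close>
  using alpha_tr_scoped [OF \<open>alpha \<Delta> s t\<close>, of "{}" "{}"]
  by (simp add: closed_translate_eq_tr_scoped \<open>closed \<Delta> s\<close> \<open>closed \<Delta> t\<close>)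

end
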